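(* For every $n\in\mathbb{N}$ let $M_n\in\mathcal{M}_n$ be fixed and let $H_n$ be a uniformly random element of $\mathcal{M}_n$. Then for every $\eta>0$, $\lim_{n\to\infty}\mathbb{P}\big(|d_M(M_n,H_n)-\mathbb{E}(d_M(M_n,H_n))|>\eta\big)=0$.
   Context: $\mathcal{M}_n$ is the set of $n\times n$ real matrices with all entries in $\{n^{-1/2},-n^{-1/2}\}$. A matrix $A$ is regarded as an operator $v\mapsto vA$ on functions on $[n]$ with the uniform probability measure. $\mathcal{S}_k(A)$ is the set of joint distributions on $\mathbb{R}^{2k}$ of $(v_1,\dots,v_k,v_1A,\dots,v_kA)$ over $v_i:[n]\to[-1,1]$; $d_M(A,B)=\sum_k2^{-k}d_H(\mathcal{S}_k(A),\mathcal{S}_k(B))$ with $d_H$ the Hausdorff distance induced by the Lévy–Prokhorov metric. *)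

theory Defs
  imports "HOL-Probability.Probability"
begin

text \<open>Matrices are functions on index pairs, extensional outside [n] x [n] (indices 0..n-1).\<close>
definition Mset :: "nat \<Rightarrow> (nat \<Rightarrow> nat \<Rightarrow> real) set" where
  "Mset n = {A. (\<forall>i<n. \<forall>j<n. A i j = 1 / sqrt (real n) \<or> A i j = - 1 / sqrt (real n))
                 \<and> (\<forall>i j. \<not> (i < n \<and> j < n) \<longrightarrow> A i j = 0)}"

definition act :: "nat \<Rightarrow> (nat \<Rightarrow> real) \<Rightarrow> (nat \<Rightarrow> nat \<Rightarrow> real) \<Rightarrow> nat \<Rightarrow> real" where
  "act n v A j = (\<Sum>i<n. v i * A i j)"

text \<open>Points of R^m are represented as functions nat => real; only coordinates < m matter.\<close>
definition edist :: "nat \<Rightarrow> (nat \<Rightarrow> real) \<Rightarrow> (nat \<Rightarrow> real) \<Rightarrow> real" where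
  "edist m x y = sqrt (\<Sum>i<m. (x i - y i)^2)"

definition nbhd :: "nat \<Rightarrow> real \<Rightarrow> (nat \<Rightarrow> real) set \<Rightarrow> (nat \<Rightarrow> real) set" where
  "nbhd m e A = {y. \<exists>x\<in>A. edist m x y < e}"

definition lp_dist :: "nat \<Rightarrow> (nat \<Rightarrow> real) pmf \<Rightarrow> (nat \<Rightarrow> real) pmf \<Rightarrow> real" where
  "lp_dist m \<mu> \<nu> = Inf {e. e > 0 \<and> (\<forall>A.
      measure_pmf.prob \<mu> A \<le> measure_pmf.prob \<nu> (nbhd m e A) + e \<and>
      measure_pmf.prob \<nu> A \<le> measure_pmf.prob \<mu> (nbhd m e A) + e)}"

definition hausdorff_lp :: "nat \<Rightarrow> (nat \<Rightarrow> real) pmf set \<Rightarrow> (nat \<Rightarrow> real) pmf set \<Rightarrow> real" where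
  "hausdorff_lp m S T = max (SUP \<mu>\<in>S. INF \<nu>\<in>T. lp_dist m \<mu> \<nu>) (SUP \<nu>\<in>T. INF \<mu>\<in>S. lp_dist m \<mu> \<nu>)"

definition profile_pt :: "nat \<Rightarrow> nat \<Rightarrow> (nat \<Rightarrow> nat \<Rightarrow> real) \<Rightarrow> (nat \<Rightarrow> nat \<Rightarrow> real) \<Rightarrow> nat \<Rightarrow> (nat \<Rightarrow> real)" where
  "profile_pt n k vs A x = (\<lambda>i. if i < k then vs i x
                               else if i < 2 * k then act n (vs (i - k)) A x else 0)"

definition Sk :: "nat \<Rightarrow> nat \<Rightarrow> (nat \<Rightarrow> nat \<Rightarrow> real) \<Rightarrow> (nat \<Rightarrow> real) pmf set" where
  "Sk n k A = {map_pmf (profile_pt n k vs A) (pmf_of_set {..<n}) | vs.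
                 \<forall>j<k. \<forall>x<n. vs j x \<in> {-1..1}}"

definition dM :: "nat \<Rightarrow> (nat \<Rightarrow> nat \<Rightarrow> real) \<Rightarrow> (nat \<Rightarrow> nat \<Rightarrow> real) \<Rightarrow> real" where
  "dM n A B = (\<Sum>k. (1/2) ^ (Suc k) * hausdorff_lp (2 * Suc k) (Sk n (Suc k) A) (Sk n (Suc k) B))"

end

theory Submission
  imports Defs
begin

text \<open>Changing one column of \<open>H\<close> changes, for every choice of the test functions \<open>v\<^sub>i\<close>, the
  profile \<open>(v(x), (vH)(x))\<close> at a single point \<open>x\<close> of \<open>[n]\<close> only. Hence every distribution in
  \<open>S\<^sub>k(H)\<close> moves by at most \<open>1/n\<close> in total variation, so by at most \<open>1/n\<close> in Levy-Prokhorov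
  distance, and \<open>d\<^sub>M(M, H)\<close> changes by at most \<open>1/n\<close>. As the \<open>n\<close> columns of a uniformly random
  sign matrix are independent, a bounded-differences (Efron-Stein type) inequality bounds the
  variance of \<open>d\<^sub>M(M\<^sub>n, H\<^sub>n)\<close> by \<open>n (1/n)\<^sup>2 = 1/n\<close>, and Chebyshev's inequality concludes.\<close>

section \<open>Variance of functions of independent uniform coordinates\<close>

lemma abs_mean_le:
  fixes u :: "'a \<Rightarrow> real"
  assumes "finite S" "S \<noteq> {}" "\<And>y. y \<in> S \<Longrightarrow> \<bar>u y\<bar> \<le> c"
  shows "\<bar>sum u S / card S\<bar> \<le> c"
proof -
  have "\<bar>sum u S\<bar> \<le> (\<Sum>y\<in>S. c)"
    by (rule order_trans[OF sum_abs sum_mono]) (rule assms(3))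
  then show ?thesis
    using assms(1,2) by (simp add: card_gt_0_iff field_simps)
qed

lemma sum_power2_deviation_split:
  fixes u :: "'a \<Rightarrow> real"
  shows "(\<Sum>y\<in>S. (u y - m)\<^sup>2) = (\<Sum>y\<in>S. (u y - sum u S / card S)\<^sup>2) + card S * (sum u S / card S - m)\<^sup>2"
proof -
  define a where "a = sum u S / card S"
  have mean: "(\<Sum>y\<in>S. u y - a) = 0"
    by (cases "finite S \<and> S \<noteq> {}") (auto simp: a_def sum_subtractf)
  have "(\<Sum>y\<in>S. (u y - m)\<^sup>2) = (\<Sum>y\<in>S. (u y - a)\<^sup>2 + 2 * (a - m) * (u y - a) + (a - m)\<^sup>2)"
    by (intro sum.cong) (auto simp: power2_eq_square algebra_simps)
  also have "\<dots> = (\<Sum>y\<in>S. (u y - a)\<^sup>2) + 2 * (a - m) * (\<Sum>y\<in>S. u y - a) + card S * (a - m)\<^sup>2"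
    by (simp add: sum.distrib sum_distrib_left)
  finally show ?thesis
    using mean by (simp add: a_def)
qed

lemma sum_PiE_insert:
  assumes "j \<notin> I"
  shows "(\<Sum>g\<in>PiE (insert j I) S. F g) = (\<Sum>g\<in>PiE I S. \<Sum>y\<in>S j. F (g(j:=y)))"
proof -
  have "inj_on (\<lambda>(y, g). g(j:=y)) (S j \<times> PiE I S)"
    by (rule inj_on_inverseI[where g="\<lambda>h. (h j, h(j:=undefined))"])
      (use assms in \<open>auto simp: PiE_def extensional_def fun_eq_iff\<close>)
  then have "(\<Sum>g\<in>PiE (insert j I) S. F g) = (\<Sum>(y, g)\<in>S j \<times> PiE I S. F (g(j:=y)))"
    by (simp add: PiE_insert_eq sum.reindex split_def)
  also have "\<dots> = (\<Sum>g\<in>PiE I S. \<Sum>y\<in>S j. F (g(j:=y)))"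
    by (simp add: sum.cartesian_product[symmetric] sum.swap[of _ "S j"])
  finally show ?thesis .
qed

lemma variance_pmf_of_set:
  "finite X \<Longrightarrow> X \<noteq> {} \<Longrightarrow> measure_pmf.variance (pmf_of_set X) f
     = (\<Sum>x\<in>X. (f x - sum f X / card X)\<^sup>2) / card X"
  by (simp add: integral_pmf_of_set)

lemma variance_pmf_of_set_PiE_insert:
  fixes f :: "('i \<Rightarrow> 'a) \<Rightarrow> real"
  assumes "j \<notin> I" "finite I" "\<And>i. i \<in> insert j I \<Longrightarrow> finite (S i) \<and> S i \<noteq> {}"
  shows "measure_pmf.variance (pmf_of_set (PiE (insert j I) S)) f
       = measure_pmf.expectation (pmf_of_set (PiE I S))
           (\<lambda>g. measure_pmf.variance (pmf_of_set (S j)) (\<lambda>y. f (g(j:=y))))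
       + measure_pmf.variance (pmf_of_set (PiE I S))
           (\<lambda>g. measure_pmf.expectation (pmf_of_set (S j)) (\<lambda>y. f (g(j:=y))))"
proof -
  define P where "P = PiE I S"
  define N where "N = real (card (S j))"
  define K where "K = real (card P)"
  define h where "h g = (\<Sum>y\<in>S j. f (g(j:=y))) / N" for g
  define m where "m = sum h P / K"
  have fin: "finite (PiE J S)" "PiE J S \<noteq> {}" if "J \<subseteq> insert j I" for J
    using that assms(3) finite_subset[OF that] assms(2) by (auto intro!: finite_PiE simp: PiE_eq_empty_iff)
  have "N > 0" "K > 0"
    using assms(3)[of j] fin[OF subset_insertI] by (auto simp: N_def K_def P_def card_gt_0_iff)
  have sum_insert: "(\<Sum>g\<in>PiE (insert j I) S. F g) = (\<Sum>g\<in>P. \<Sum>y\<in>S j. F (g(j:=y)))" for F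
    unfolding P_def by (rule sum_PiE_insert[OF assms(1)])
  have card_insert: "real (card (PiE (insert j I) S)) = N * K"
    using sum_insert[of "\<lambda>_. 1::real"] by (simp add: N_def K_def)
  have expectation_h: "measure_pmf.expectation (pmf_of_set (S j)) (\<lambda>y. f (g(j:=y))) = h g" for g
    using assms(3)[of j] by (simp add: integral_pmf_of_set h_def N_def)
  have mean: "sum f (PiE (insert j I) S) / card (PiE (insert j I) S) = m"
    using \<open>N > 0\<close> \<open>K > 0\<close>
    by (simp add: card_insert sum_insert m_def h_def sum_divide_distrib[symmetric])
  have "measure_pmf.variance (pmf_of_set (PiE (insert j I) S)) f
      = (\<Sum>g\<in>P. \<Sum>y\<in>S j. (f (g(j:=y)) - m)\<^sup>2) / (N * K)"
    unfolding variance_pmf_of_set[OF fin[OF subset_refl]] mean by (simp add: card_insert sum_insert)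
  also have "\<dots> = (\<Sum>g\<in>P. (\<Sum>y\<in>S j. (f (g(j:=y)) - h g)\<^sup>2) + N * (h g - m)\<^sup>2) / (N * K)"
    unfolding h_def N_def by (subst sum_power2_deviation_split) (rule refl)
  also have "\<dots> = (\<Sum>g\<in>P. (\<Sum>y\<in>S j. (f (g(j:=y)) - h g)\<^sup>2) / N) / K + (\<Sum>g\<in>P. (h g - m)\<^sup>2) / K"
    using \<open>N > 0\<close>
    by (simp add: sum.distrib add_divide_distrib sum_divide_distrib[symmetric] sum_distrib_left[symmetric])
  also have "(\<Sum>g\<in>P. (\<Sum>y\<in>S j. (f (g(j:=y)) - h g)\<^sup>2) / N) / K
      = measure_pmf.expectation (pmf_of_set P) (\<lambda>g. measure_pmf.variance (pmf_of_set (S j)) (\<lambda>y. f (g(j:=y))))"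
    using fin[OF subset_insertI] assms(3)[of j]
    by (simp add: expectation_h integral_pmf_of_set N_def K_def P_def
        sum_divide_distrib[symmetric] mult.commute)
  also have "(\<Sum>g\<in>P. (h g - m)\<^sup>2) / K
      = measure_pmf.variance (pmf_of_set P) (\<lambda>g. measure_pmf.expectation (pmf_of_set (S j)) (\<lambda>y. f (g(j:=y))))"
    using fin[OF subset_insertI]
    by (simp add: expectation_h integral_pmf_of_set K_def P_def m_def)
  finally show ?thesis
    unfolding P_def .
qed

lemma expectation_pmf_of_set_le:
  fixes u :: "'a \<Rightarrow> real"
  assumes "finite S" "S \<noteq> {}" "\<And>y. y \<in> S \<Longrightarrow> u y \<le> c"
  shows "measure_pmf.expectation (pmf_of_set S) u \<le> c"
  using assms
  by (intro measure_pmf.integral_le_const integrable_measure_pmf_finite AE_pmfI) auto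

lemma variance_pmf_of_set_le:
  fixes u :: "'a \<Rightarrow> real"
  assumes "finite S" "S \<noteq> {}" "\<And>y y'. y \<in> S \<Longrightarrow> y' \<in> S \<Longrightarrow> \<bar>u y - u y'\<bar> \<le> c"
  shows "measure_pmf.variance (pmf_of_set S) u \<le> c\<^sup>2"
proof (rule expectation_pmf_of_set_le[OF assms(1,2)])
  fix y assume "y \<in> S"
  have "u y - measure_pmf.expectation (pmf_of_set S) u = (\<Sum>y'\<in>S. u y - u y') / card S"
    using assms(1,2) by (simp add: integral_pmf_of_set sum_subtractf field_simps)
  also have "\<bar>\<dots>\<bar> \<le> c"
    using \<open>y \<in> S\<close> by (intro abs_mean_le assms)
  finally show "(u y - measure_pmf.expectation (pmf_of_set S) u)\<^sup>2 \<le> c\<^sup>2"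
    using power_mono[OF _ abs_ge_zero, of _ c 2] by simp
qed

theorem variance_pmf_of_set_PiE_le:
  fixes f :: "('i \<Rightarrow> 'a) \<Rightarrow> real"
  assumes "finite I" "\<And>i. i \<in> I \<Longrightarrow> finite (S i) \<and> S i \<noteq> {}"
    and "\<And>i g y. i \<in> I \<Longrightarrow> g \<in> PiE I S \<Longrightarrow> y \<in> S i \<Longrightarrow> \<bar>f (g(i:=y)) - f g\<bar> \<le> c i"
  shows "measure_pmf.variance (pmf_of_set (PiE I S)) f \<le> (\<Sum>i\<in>I. (c i)\<^sup>2)"
  using assms
proof (induction I arbitrary: f rule: finite_induct)
  case empty
  show ?case by (simp add: variance_pmf_of_set)
next
  case (insert j I)
  define h where "h = (\<lambda>g. measure_pmf.expectation (pmf_of_set (S j)) (\<lambda>y. f (g(j:=y))))"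
  have fin: "finite (PiE I S)" "PiE I S \<noteq> {}"
    using insert.hyps(1) insert.prems(1) by (auto intro!: finite_PiE simp: PiE_eq_empty_iff)
  have "S j \<noteq> {}" "finite (S j)"
    using insert.prems(1) by auto
  have upd_PiE: "g(j:=y) \<in> PiE (insert j I) S" if "g \<in> PiE I S" "y \<in> S j" for g y
    using that by (rule PiE_fun_upd[rotated])
  have "measure_pmf.expectation (pmf_of_set (PiE I S))
          (\<lambda>g. measure_pmf.variance (pmf_of_set (S j)) (\<lambda>y. f (g(j:=y)))) \<le> (c j)\<^sup>2"
  proof (intro expectation_pmf_of_set_le[OF fin] variance_pmf_of_set_le \<open>finite (S j)\<close> \<open>S j \<noteq> {}\<close>)
    fix g y y' assume "g \<in> PiE I S" "y \<in> S j" "y' \<in> S j"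
    then show "\<bar>f (g(j:=y)) - f (g(j:=y'))\<bar> \<le> c j"
      using insert.prems(2)[OF insertI1 upd_PiE, of g y' y] by (simp only: fun_upd_upd)
  qed
  moreover have "measure_pmf.variance (pmf_of_set (PiE I S)) h \<le> (\<Sum>i\<in>I. (c i)\<^sup>2)"
  proof (rule insert.IH)
    fix i g z assume "i \<in> I" "g \<in> PiE I S" "z \<in> S i"
    with insert.hyps(2) have "i \<noteq> j" by blast
    have "h (g(i:=z)) - h g = (\<Sum>y\<in>S j. f ((g(j:=y))(i:=z)) - f (g(j:=y))) / card (S j)"
      using \<open>finite (S j)\<close> \<open>S j \<noteq> {}\<close> \<open>i \<noteq> j\<close>
      by (simp add: h_def integral_pmf_of_set sum_subtractf diff_divide_distrib fun_upd_twist)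
    also have "\<bar>\<dots>\<bar> \<le> c i"
      using \<open>i \<in> I\<close> \<open>g \<in> PiE I S\<close> \<open>z \<in> S i\<close>
      by (intro abs_mean_le \<open>finite (S j)\<close> \<open>S j \<noteq> {}\<close> insert.prems(2) upd_PiE) auto
    finally show "\<bar>h (g(i:=z)) - h g\<bar> \<le> c i" .
  qed (use insert.prems(1) in auto)
  moreover have "measure_pmf.variance (pmf_of_set (PiE (insert j I) S)) f
       = measure_pmf.expectation (pmf_of_set (PiE I S))
           (\<lambda>g. measure_pmf.variance (pmf_of_set (S j)) (\<lambda>y. f (g(j:=y))))
       + measure_pmf.variance (pmf_of_set (PiE I S)) h"
    unfolding h_def by (rule variance_pmf_of_set_PiE_insert[OF insert.hyps(2,1) insert.prems(1)])
  ultimately show ?case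
    using insert.hyps by simp
qed

lemma measure_pmf_Chebyshev:
  fixes f :: "'a \<Rightarrow> real"
  assumes "finite (set_pmf p)" "a > 0"
  shows "measure_pmf.prob p {x. a < \<bar>f x - measure_pmf.expectation p f\<bar>}
    \<le> measure_pmf.variance p f / a\<^sup>2"
proof -
  have "measure_pmf.prob p {x. a < \<bar>f x - measure_pmf.expectation p f\<bar>}
      \<le> measure_pmf.prob p {x \<in> space (measure_pmf p). a \<le> \<bar>f x - measure_pmf.expectation p f\<bar>}"
    by (intro measure_pmf.finite_measure_mono) auto
  also have "\<dots> \<le> measure_pmf.variance p f / a\<^sup>2"
    using assms by (intro measure_pmf.Chebyshev_inequality integrable_measure_pmf_finite) simp_all
  finally show ?thesis .
qed

section \<open>Levy-Prokhorov and Hausdorff distances\<close>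

definition lp_radii :: "nat \<Rightarrow> (nat \<Rightarrow> real) pmf \<Rightarrow> (nat \<Rightarrow> real) pmf \<Rightarrow> real set" where
  "lp_radii m \<mu> \<nu> = {e. e > 0 \<and> (\<forall>A.
      measure_pmf.prob \<mu> A \<le> measure_pmf.prob \<nu> (nbhd m e A) + e \<and>
      measure_pmf.prob \<nu> A \<le> measure_pmf.prob \<mu> (nbhd m e A) + e)}"

lemma lp_dist_eq_Inf_lp_radii: "lp_dist m \<mu> \<nu> = Inf (lp_radii m \<mu> \<nu>)"
  unfolding lp_dist_def lp_radii_def ..

lemma one_in_lp_radii: "1 \<in> lp_radii m \<mu> \<nu>"
  unfolding lp_radii_def by (auto intro: order_trans[OF measure_pmf.prob_le_1] simp: add_increasing)

lemma bdd_below_lp_radii: "bdd_below (lp_radii m \<mu> \<nu>)"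
  unfolding lp_radii_def by (rule bdd_belowI[of _ 0]) auto

lemma lp_dist_nonneg: "0 \<le> lp_dist m \<mu> \<nu>"
  unfolding lp_dist_eq_Inf_lp_radii
proof (rule cInf_greatest)
  show "lp_radii m \<mu> \<nu> \<noteq> {}"
    using one_in_lp_radii by blast
qed (simp add: lp_radii_def)

lemma lp_dist_le_one: "lp_dist m \<mu> \<nu> \<le> 1"
  unfolding lp_dist_eq_Inf_lp_radii by (rule cInf_lower[OF one_in_lp_radii bdd_below_lp_radii])

lemma nbhd_mono: "e \<le> e' \<Longrightarrow> nbhd m e A \<subseteq> nbhd m e' A"
  unfolding nbhd_def by force

lemma lp_dist_le_perturb:
  assumes "\<delta> \<ge> 0" and close: "\<And>A. \<bar>measure_pmf.prob \<nu> A - measure_pmf.prob \<nu>' A\<bar> \<le> \<delta>"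
  shows "lp_dist m \<mu> \<nu>' \<le> lp_dist m \<mu> \<nu> + \<delta>"
proof -
  have shift: "e + \<delta> \<in> lp_radii m \<mu> \<nu>'" if "e \<in> lp_radii m \<mu> \<nu>" for e
  proof -
    have "e > 0"
      and \<mu>\<nu>: "\<And>A. measure_pmf.prob \<mu> A \<le> measure_pmf.prob \<nu> (nbhd m e A) + e"
      and \<nu>\<mu>: "\<And>A. measure_pmf.prob \<nu> A \<le> measure_pmf.prob \<mu> (nbhd m e A) + e"
      using that unfolding lp_radii_def by auto
    have grow: "measure_pmf.prob p (nbhd m e A) \<le> measure_pmf.prob p (nbhd m (e + \<delta>) A)" for p A
      using \<open>\<delta> \<ge> 0\<close> by (intro measure_pmf.finite_measure_mono nbhd_mono) auto
    have "measure_pmf.prob \<mu> A \<le> measure_pmf.prob \<nu>' (nbhd m (e + \<delta>) A) + (e + \<delta>)"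
      and "measure_pmf.prob \<nu>' A \<le> measure_pmf.prob \<mu> (nbhd m (e + \<delta>) A) + (e + \<delta>)" for A
      using \<mu>\<nu>[of A] \<nu>\<mu>[of A] close[of A] close[of "nbhd m e A"] grow[of \<mu> A] grow[of \<nu>' A]
      by (auto simp: abs_le_iff)
    then show ?thesis
      using \<open>e > 0\<close> \<open>\<delta> \<ge> 0\<close> unfolding lp_radii_def by auto
  qed
  have "lp_dist m \<mu> \<nu>' - \<delta> \<le> Inf (lp_radii m \<mu> \<nu>)"
  proof (rule cInf_greatest)
    show "lp_radii m \<mu> \<nu> \<noteq> {}"
      using one_in_lp_radii by blast
    fix e assume "e \<in> lp_radii m \<mu> \<nu>"
    then show "lp_dist m \<mu> \<nu>' - \<delta> \<le> e"
      unfolding lp_dist_eq_Inf_lp_radii using cInf_lower[OF shift bdd_below_lp_radii] by force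
  qed
  then show ?thesis
    unfolding lp_dist_eq_Inf_lp_radii by simp
qed

lemma cINF_mem_Icc:
  fixes f :: "'a \<Rightarrow> 'b::conditionally_complete_linorder"
  assumes "A \<noteq> {}" "\<And>x. x \<in> A \<Longrightarrow> f x \<in> {a..b}"
  shows "(INF x\<in>A. f x) \<in> {a..b}"
proof -
  obtain x where "x \<in> A"
    using assms(1) by blast
  have "(INF x\<in>A. f x) \<le> b"
    using \<open>x \<in> A\<close> assms(2) by (intro cINF_lower2[where x=x] bdd_belowI[of _ a]) auto
  moreover have "a \<le> (INF x\<in>A. f x)"
    using assms by (intro cINF_greatest) auto
  ultimately show ?thesis
    by simp
qed

lemma cSUP_mem_Icc:
  fixes f :: "'a \<Rightarrow> 'b::conditionally_complete_linorder"
  assumes "A \<noteq> {}" "\<And>x. x \<in> A \<Longrightarrow> f x \<in> {a..b}"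
  shows "(SUP x\<in>A. f x) \<in> {a..b}"
proof -
  obtain x where "x \<in> A"
    using assms(1) by blast
  have "a \<le> (SUP x\<in>A. f x)"
    using \<open>x \<in> A\<close> assms(2) by (intro cSUP_upper2[where x=x] bdd_aboveI[of _ b]) auto
  moreover have "(SUP x\<in>A. f x) \<le> b"
    using assms by (intro cSUP_least) auto
  ultimately show ?thesis
    by simp
qed

lemma cINF_le_cINF_plus:
  fixes f :: "'a \<Rightarrow> real" and g :: "'b \<Rightarrow> real"
  assumes "A \<noteq> {}" "bdd_below (g ` B)" "\<And>x. x \<in> A \<Longrightarrow> \<exists>y\<in>B. g y \<le> f x + \<delta>"
  shows "(INF y\<in>B. g y) \<le> (INF x\<in>A. f x) + \<delta>"
proof -
  have "(INF y\<in>B. g y) - \<delta> \<le> (INF x\<in>A. f x)"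
  proof (rule cINF_greatest[OF assms(1)])
    fix x assume "x \<in> A"
    then obtain y where "y \<in> B" "g y \<le> f x + \<delta>"
      using assms(3) by blast
    then show "(INF y\<in>B. g y) - \<delta> \<le> f x"
      using cINF_lower[OF assms(2)] by force
  qed
  then show ?thesis
    by simp
qed

lemma cSUP_le_cSUP_plus:
  fixes f :: "'a \<Rightarrow> real" and g :: "'b \<Rightarrow> real"
  assumes "A \<noteq> {}" "bdd_above (g ` B)" "\<And>x. x \<in> A \<Longrightarrow> \<exists>y\<in>B. f x \<le> g y + \<delta>"
  shows "(SUP x\<in>A. f x) \<le> (SUP y\<in>B. g y) + \<delta>"
proof (rule cSUP_least[OF assms(1)])
  fix x assume "x \<in> A"
  then obtain y where "y \<in> B" "f x \<le> g y + \<delta>"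
    using assms(3) by blast
  then show "f x \<le> (SUP y\<in>B. g y) + \<delta>"
    using cSUP_upper[OF _ assms(2)] by force
qed

lemma INF_lp_dist_mem_Icc:
  "T \<noteq> {} \<Longrightarrow> (INF \<nu>\<in>T. lp_dist m \<mu> \<nu>) \<in> {0..1}"
  "S \<noteq> {} \<Longrightarrow> (INF \<mu>\<in>S. lp_dist m \<mu> \<nu>) \<in> {0..1}"
  by (intro cINF_mem_Icc; simp add: lp_dist_nonneg lp_dist_le_one)+

lemma abs_hausdorff_lp_le_one:
  assumes "S \<noteq> {}" "T \<noteq> {}"
  shows "\<bar>hausdorff_lp m S T\<bar> \<le> 1"
proof -
  have "(SUP \<mu>\<in>S. INF \<nu>\<in>T. lp_dist m \<mu> \<nu>) \<in> {0..1}"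
    and "(SUP \<nu>\<in>T. INF \<mu>\<in>S. lp_dist m \<mu> \<nu>) \<in> {0..1}"
    using assms by (intro cSUP_mem_Icc INF_lp_dist_mem_Icc; simp)+
  then show ?thesis
    unfolding hausdorff_lp_def by auto
qed

lemma hausdorff_lp_le_perturb:
  assumes "S \<noteq> {}" "T \<noteq> {}"
    and T_T': "\<And>\<nu>. \<nu> \<in> T \<Longrightarrow> \<exists>\<nu>'\<in>T'. \<forall>\<mu>. lp_dist m \<mu> \<nu>' \<le> lp_dist m \<mu> \<nu> + \<delta>"
    and T'_T: "\<And>\<nu>'. \<nu>' \<in> T' \<Longrightarrow> \<exists>\<nu>\<in>T. \<forall>\<mu>. lp_dist m \<mu> \<nu>' \<le> lp_dist m \<mu> \<nu> + \<delta>"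
  shows "hausdorff_lp m S T' \<le> hausdorff_lp m S T + \<delta>"
proof -
  have "T' \<noteq> {}"
    using assms(2) T_T' by blast
  have bdd_below: "bdd_below ((\<lambda>\<nu>. lp_dist m \<mu> \<nu>) ` B)" "bdd_below ((\<lambda>\<mu>. lp_dist m \<mu> \<nu>) ` B)"
    for \<mu> \<nu> B
    by (auto intro: bdd_belowI[of _ 0] lp_dist_nonneg)
  have bdd_above: "bdd_above ((\<lambda>x. INF y\<in>B. d x y) ` A)"
    if "B \<noteq> {}" "\<And>x. (INF y\<in>B. d x y) \<in> {0..1}" for A B and d :: "_ \<Rightarrow> _ \<Rightarrow> real"
    using that by (intro bdd_aboveI[of _ 1]) auto
  have INF_T'_le: "(INF \<nu>\<in>T'. lp_dist m \<mu> \<nu>) \<le> (INF \<nu>\<in>T. lp_dist m \<mu> \<nu>) + \<delta>" for \<mu>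
    using assms(2) T_T' by (intro cINF_le_cINF_plus bdd_below) blast+
  have SUP_S_le: "(SUP \<mu>\<in>S. INF \<nu>\<in>T'. lp_dist m \<mu> \<nu>) \<le> (SUP \<mu>\<in>S. INF \<nu>\<in>T. lp_dist m \<mu> \<nu>) + \<delta>"
    using assms(1,2) INF_T'_le INF_lp_dist_mem_Icc(1) by (intro cSUP_le_cSUP_plus bdd_above) blast+
  have INF_S_le: "(INF \<mu>\<in>S. lp_dist m \<mu> \<nu>') \<le> (INF \<mu>\<in>S. lp_dist m \<mu> \<nu>) + \<delta>"
    if "\<forall>\<mu>. lp_dist m \<mu> \<nu>' \<le> lp_dist m \<mu> \<nu> + \<delta>" for \<nu> \<nu>'
    using assms(1) that by (intro cINF_le_cINF_plus bdd_below) blast+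
  have SUP_T'_le: "(SUP \<nu>\<in>T'. INF \<mu>\<in>S. lp_dist m \<mu> \<nu>) \<le> (SUP \<nu>\<in>T. INF \<mu>\<in>S. lp_dist m \<mu> \<nu>) + \<delta>"
    using \<open>T' \<noteq> {}\<close> assms(1) T'_T INF_S_le INF_lp_dist_mem_Icc(2)
    by (intro cSUP_le_cSUP_plus bdd_above) blast+
  show ?thesis
    using SUP_S_le SUP_T'_le unfolding hausdorff_lp_def by linarith
qed

section \<open>Changing one column\<close>

lemma abs_card_diff_le_one_if_Diff_singleton_eq:
  assumes "finite P" "finite Q" "P - {j} = Q - {j}"
  shows "\<bar>real (card P) - real (card Q)\<bar> \<le> 1"
proof -
  have card_split: "real (card R) = real (card (R - {j})) + of_bool (j \<in> R)"
    if "finite R" for R :: "'a set"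
    using card_Suc_Diff1[OF that, of j] by (cases "j \<in> R") (simp_all flip: of_nat_Suc)
  show ?thesis
    using card_split[OF assms(1)] card_split[OF assms(2)] assms(3) by simp
qed

lemma prob_map_pmf_of_set_perturb:
  assumes "finite X" "X \<noteq> {}" "\<And>x. x \<in> X \<Longrightarrow> x \<noteq> j \<Longrightarrow> f x = g x"
  shows "\<bar>measure_pmf.prob (map_pmf f (pmf_of_set X)) A - measure_pmf.prob (map_pmf g (pmf_of_set X)) A\<bar>
    \<le> 1 / card X"
proof -
  have "X \<inter> f -` A - {j} = X \<inter> g -` A - {j}"
    using assms(3) by auto
  then have "\<bar>real (card (X \<inter> f -` A)) - real (card (X \<inter> g -` A))\<bar> \<le> 1"
    using assms(1) by (intro abs_card_diff_le_one_if_Diff_singleton_eq) simp_all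
  then show ?thesis
    using assms(1,2) by (simp add: measure_pmf_of_set diff_divide_distrib[symmetric] divide_right_mono)
qed

lemma profile_pt_cong_column:
  assumes "\<And>i. H i x = H' i x"
  shows "profile_pt n k vs H x = profile_pt n k vs H' x"
  unfolding profile_pt_def act_def by (simp only: assms)

lemma Sk_nonempty: "Sk n k A \<noteq> {}"
  unfolding Sk_def by (auto intro!: exI[of _ "\<lambda>_ _. 0"])

lemma hausdorff_lp_Sk_column_perturb:
  assumes "n > 0" and same_columns: "\<And>i x. x \<noteq> j \<Longrightarrow> H i x = H' i x"
  shows "\<bar>hausdorff_lp m (Sk n k A) (Sk n k H) - hausdorff_lp m (Sk n k A) (Sk n k H')\<bar> \<le> 1 / n"
proof -
  let ?law = "\<lambda>H vs. map_pmf (profile_pt n k vs H) (pmf_of_set {..<n})"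
  have "profile_pt n k vs H x = profile_pt n k vs H' x" if "x \<noteq> j" for vs x
    using same_columns[OF that] by (rule profile_pt_cong_column)
  then have "\<bar>measure_pmf.prob (?law H vs) B - measure_pmf.prob (?law H' vs) B\<bar> \<le> 1 / n" for vs B
    using prob_map_pmf_of_set_perturb[of "{..<n}" j "profile_pt n k vs H" "profile_pt n k vs H'" B] assms(1)
    by (simp add: lessThan_empty_iff)
  then have lp_H'_H: "\<forall>\<mu>. lp_dist m \<mu> (?law H' vs) \<le> lp_dist m \<mu> (?law H vs) + 1 / n"
    and lp_H_H': "\<forall>\<mu>. lp_dist m \<mu> (?law H vs) \<le> lp_dist m \<mu> (?law H' vs) + 1 / n" for vs
    by (intro allI lp_dist_le_perturb; use in \<open>simp add: abs_minus_commute\<close>)+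
  have "hausdorff_lp m (Sk n k A) (Sk n k H') \<le> hausdorff_lp m (Sk n k A) (Sk n k H) + 1 / n"
    and "hausdorff_lp m (Sk n k A) (Sk n k H) \<le> hausdorff_lp m (Sk n k A) (Sk n k H') + 1 / n"
    using lp_H'_H lp_H_H' by (intro hausdorff_lp_le_perturb Sk_nonempty; unfold Sk_def; blast)+
  then show ?thesis
    by linarith
qed

lemma abs_suminf_halves_diff_le:
  fixes x y :: "nat \<Rightarrow> real"
  assumes "\<And>k. \<bar>x k\<bar> \<le> B" "\<And>k. \<bar>y k\<bar> \<le> B" "\<And>k. \<bar>x k - y k\<bar> \<le> \<delta>"
  shows "\<bar>(\<Sum>k. (1/2) ^ Suc k * x k) - (\<Sum>k. (1/2) ^ Suc k * y k)\<bar> \<le> \<delta>"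
proof -
  have halves: "(\<lambda>k. (1/2) ^ Suc k * c) sums c" for c :: real
    using sums_mult[OF geometric_sums[of "1/2::real"], of "c / 2"] by (simp add: field_simps)
  have summable: "summable (\<lambda>k. (1/2) ^ Suc k * z k)" if "\<And>k. \<bar>z k\<bar> \<le> C" for z and C :: real
  proof (rule summable_comparison_test[OF _ sums_summable[OF halves[of C]]])
    show "\<exists>N. \<forall>k\<ge>N. norm ((1/2) ^ Suc k * z k) \<le> (1/2) ^ Suc k * C"
      using that by (simp add: abs_mult mult_left_mono)
  qed
  have summable_abs: "summable (\<lambda>k. \<bar>(1/2) ^ Suc k * (x k - y k)\<bar>)"
    using summable[of "\<lambda>k. \<bar>x k - y k\<bar>" \<delta>] assms(3) by (simp add: abs_mult)
  have "(\<Sum>k. (1/2) ^ Suc k * x k) - (\<Sum>k. (1/2) ^ Suc k * y k) = (\<Sum>k. (1/2) ^ Suc k * (x k - y k))"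
    by (subst suminf_diff[OF summable summable, OF assms(1,2)]) (simp add: right_diff_distrib)
  also have "\<bar>\<dots>\<bar> \<le> (\<Sum>k. \<bar>(1/2) ^ Suc k * (x k - y k)\<bar>)"
    using summable_norm[of "\<lambda>k. (1/2::real) ^ Suc k * (x k - y k)"] summable_abs by simp
  also have "\<dots> \<le> (\<Sum>k. (1/2) ^ Suc k * \<delta>)"
    using summable_abs assms(3)
    by (intro suminf_le sums_summable[OF halves]) (simp_all add: abs_mult mult_left_mono)
  also have "\<dots> = \<delta>"
    using halves by (rule sums_unique[symmetric])
  finally show ?thesis .
qed

lemma dM_column_perturb:
  assumes "n > 0" "\<And>i x. x \<noteq> j \<Longrightarrow> H i x = H' i x"
  shows "\<bar>dM n A H - dM n A H'\<bar> \<le> 1 / n"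
  unfolding dM_def
  by (intro abs_suminf_halves_diff_le[where B=1] abs_hausdorff_lp_le_one
      hausdorff_lp_Sk_column_perturb Sk_nonempty assms)

section \<open>Uniform sign matrices as independent columns\<close>

definition column_set :: "nat \<Rightarrow> (nat \<Rightarrow> real) set" where
  "column_set n = {c. \<forall>i. (i \<in> {..<n} \<longrightarrow> c i \<in> {1 / sqrt (real n), - 1 / sqrt (real n)})
                        \<and> (i \<notin> {..<n} \<longrightarrow> c i = 0)}"

definition of_columns :: "nat \<Rightarrow> (nat \<Rightarrow> nat \<Rightarrow> real) \<Rightarrow> nat \<Rightarrow> nat \<Rightarrow> real" where
  "of_columns n g = (\<lambda>i j. if j < n then g j i else 0)"

lemma finite_column_set: "finite (column_set n)"
  unfolding column_set_def by (rule finite_set_of_finite_funs) simp_all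

lemma column_set_nonempty: "column_set n \<noteq> {}"
proof -
  have "(\<lambda>i. if i < n then 1 / sqrt (real n) else 0) \<in> column_set n"
    unfolding column_set_def by auto
  then show ?thesis
    by blast
qed

lemma Mset_eq_image_of_columns: "Mset n = of_columns n ` PiE {..<n} (\<lambda>_. column_set n)"
proof
  show "Mset n \<subseteq> of_columns n ` PiE {..<n} (\<lambda>_. column_set n)"
  proof
    fix A assume "A \<in> Mset n"
    then have "A = of_columns n (restrict (\<lambda>j i. A i j) {..<n})"
      and "restrict (\<lambda>j i. A i j) {..<n} \<in> PiE {..<n} (\<lambda>_. column_set n)"
      unfolding Mset_def of_columns_def column_set_def by (auto simp: fun_eq_iff)
    then show "A \<in> of_columns n ` PiE {..<n} (\<lambda>_. column_set n)"
      by blast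
  qed
  show "of_columns n ` PiE {..<n} (\<lambda>_. column_set n) \<subseteq> Mset n"
    unfolding Mset_def of_columns_def column_set_def by (force simp: PiE_iff)
qed

lemma inj_on_of_columns: "inj_on (of_columns n) (PiE {..<n} (\<lambda>_. column_set n))"
proof (rule inj_onI)
  fix g g' assume "g \<in> PiE {..<n} (\<lambda>_. column_set n)" "g' \<in> PiE {..<n} (\<lambda>_. column_set n)"
    and "of_columns n g = of_columns n g'"
  then show "g = g'"
    unfolding of_columns_def by (auto simp: fun_eq_iff PiE_iff extensional_def) metis
qed

lemma finite_Mset: "finite (Mset n)"
  unfolding Mset_eq_image_of_columns by (intro finite_imageI finite_PiE finite_column_set) simp

lemma pmf_of_set_Mset:
  "pmf_of_set (Mset n) = map_pmf (of_columns n) (pmf_of_set (PiE {..<n} (\<lambda>_. column_set n)))"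
  by (simp add: Mset_eq_image_of_columns map_pmf_of_set_inj inj_on_of_columns finite_PiE
      finite_column_set column_set_nonempty PiE_eq_empty_iff)

lemma variance_dM_le:
  assumes "n > 0"
  shows "measure_pmf.variance (pmf_of_set (Mset n)) (dM n A) \<le> 1 / n"
proof -
  have "measure_pmf.variance (pmf_of_set (Mset n)) (dM n A)
      = measure_pmf.variance (pmf_of_set (PiE {..<n} (\<lambda>_. column_set n))) (\<lambda>g. dM n A (of_columns n g))"
    by (simp add: pmf_of_set_Mset)
  also have "\<dots> \<le> (\<Sum>j<n. (1 / n)\<^sup>2)"
  proof (rule variance_pmf_of_set_PiE_le)
    fix j g y
    show "\<bar>dM n A (of_columns n (g(j:=y))) - dM n A (of_columns n g)\<bar> \<le> 1 / n"
      by (rule dM_column_perturb[OF assms, of j]) (simp add: of_columns_def)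
  qed (simp_all add: finite_column_set column_set_nonempty)
  also have "\<dots> = 1 / n"
    using assms by (simp add: power2_eq_square)
  finally show ?thesis .
qed

lemma Mset_nonempty: "Mset n \<noteq> {}"
  unfolding Mset_eq_image_of_columns by (simp add: PiE_eq_empty_iff column_set_nonempty)

lemma prob_dM_deviation_le:
  assumes "n > 0" "\<eta> > 0"
  shows "measure_pmf.prob (pmf_of_set (Mset n))
           {H. \<bar>dM n A H - measure_pmf.expectation (pmf_of_set (Mset n)) (dM n A)\<bar> > \<eta>}
         \<le> (1 / \<eta>\<^sup>2) / n"
proof -
  have "finite (set_pmf (pmf_of_set (Mset n)))"
    by (simp add: finite_Mset Mset_nonempty)
  then have "measure_pmf.prob (pmf_of_set (Mset n))
           {H. \<bar>dM n A H - measure_pmf.expectation (pmf_of_set (Mset n)) (dM n A)\<bar> > \<eta>}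
         \<le> measure_pmf.variance (pmf_of_set (Mset n)) (dM n A) / \<eta>\<^sup>2"
    using \<open>\<eta> > 0\<close> by (rule measure_pmf_Chebyshev)
  also have "\<dots> \<le> (1 / n) / \<eta>\<^sup>2"
    using assms by (intro divide_right_mono variance_dM_le) simp_all
  finally show ?thesis
    by (simp add: mult.commute)
qed

theorem lemma11p2:
  fixes M :: "nat \<Rightarrow> nat \<Rightarrow> nat \<Rightarrow> real" and \<eta> :: real
  assumes "\<And>n. M n \<in> Mset n"
    and "\<eta> > 0"
  shows "(\<lambda>n. measure_pmf.prob (pmf_of_set (Mset n))
            {H. \<bar>dM n (M n) H - measure_pmf.expectation (pmf_of_set (Mset n)) (\<lambda>H'. dM n (M n) H')\<bar> > \<eta>})
         \<longlonglongrightarrow> 0"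
proof (rule tendsto_sandwich[of "\<lambda>_. 0" _ _ "\<lambda>n. (1 / \<eta>\<^sup>2) / real n"])
  \<comment> \<open>The bound holds for every reference matrix.\<close>
  show "\<forall>\<^sub>F n in sequentially. measure_pmf.prob (pmf_of_set (Mset n))
            {H. \<bar>dM n (M n) H - measure_pmf.expectation (pmf_of_set (Mset n)) (\<lambda>H'. dM n (M n) H')\<bar> > \<eta>}
          \<le> (1 / \<eta>\<^sup>2) / n"
    using prob_dM_deviation_le[OF _ assms(2)] by (intro eventually_sequentiallyI[of 1]) simp
qed (rule lim_const_over_n | simp)+

end
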